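(* For any compact metric measure space $(X,d_X,\mu_X)$, the eigenvalue $\lambda_1$ of largest absolute value of the distance kernel operator $D^X$ satisfies $|\lambda_1|\le\operatorname{diam}(X)\operatorname{vol}(X)$, and this bound is asymptotically sharp: there exist compact metric measure spaces $X_n$ for which $|\lambda_1(X_n)|/(\operatorname{diam}(X_n)\operatorname{vol}(X_n))\to1$.
   Context: A metric measure space carries a Radon Borel measure $\mu_X$; $\operatorname{vol}(X)=\mu_X(X)$ and $\operatorname{diam}(X)=\sup\{d_X(x,x'):x,x'\in X\}$. The distance kernel operator is $(D^Xf)(x)=\int_X f(y)d_X(x,y)\,d\mu_X(y)$ on $L^2(X,\mu_X)$; its eigenvalues are ordered so that $|\lambda_1|\ge|\lambda_2|\ge\cdots$. *)

theory Defs
  imports "HOL-Analysis.Analysis"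
begin

definition mm_borel :: "'a set \<Rightarrow> ('a \<Rightarrow> 'a \<Rightarrow> real) \<Rightarrow> 'a measure" where
  "mm_borel M d = sigma M {U. openin (Metric_space.mtopology M d) U}"

text \<open>Compact metric measure space: compact metric space (M,d) with a finite
  (on a compact metric space: equivalently Radon) Borel measure mu on M.\<close>
definition compact_mm_space :: "'a set \<Rightarrow> ('a \<Rightarrow> 'a \<Rightarrow> real) \<Rightarrow> 'a measure \<Rightarrow> bool" where
  "compact_mm_space M d \<mu> \<longleftrightarrow>
     Metric_space M d \<and> compact_space (Metric_space.mtopology M d) \<and>
     space \<mu> = M \<and> sets \<mu> = sets (mm_borel M d) \<and> finite_measure \<mu>"

definition mm_diam :: "'a set \<Rightarrow> ('a \<Rightarrow> 'a \<Rightarrow> real) \<Rightarrow> real" where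
  "mm_diam M d = Sup {d x x' | x x'. x \<in> M \<and> x' \<in> M}"

definition mm_vol :: "'a measure \<Rightarrow> real" where
  "mm_vol \<mu> = measure \<mu> (space \<mu>)"

definition dist_kernel_op :: "'a measure \<Rightarrow> ('a \<Rightarrow> 'a \<Rightarrow> real) \<Rightarrow> ('a \<Rightarrow> real) \<Rightarrow> 'a \<Rightarrow> real" where
  "dist_kernel_op \<mu> d f x = (\<integral>y. f y * d x y \<partial>\<mu>)"

definition dist_kernel_eigenvalue :: "'a measure \<Rightarrow> ('a \<Rightarrow> 'a \<Rightarrow> real) \<Rightarrow> real \<Rightarrow> bool" where
  "dist_kernel_eigenvalue \<mu> d l \<longleftrightarrow>
     (\<exists>f. f \<in> borel_measurable \<mu> \<and> integrable \<mu> (\<lambda>x. (f x)\<^sup>2) \<and>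
          \<not> (AE x in \<mu>. f x = 0) \<and>
          (AE x in \<mu>. dist_kernel_op \<mu> d f x = l * f x))"

end

theory Submission
  imports Defs "HOL-Real_Asymp.Real_Asymp"
begin

text \<open>For a kernel bounded by \<open>D\<close> on a finite measure space, an eigenfunction \<open>f\<close> satisfies
  \<open>\<bar>\<lambda>\<bar> \<bar>f x\<bar> = \<bar>\<integral> f(y) k(x,y) d\<mu>(y)\<bar> \<le> D \<parallel>f\<parallel>\<^sub>1\<close>; integrating over \<open>x\<close> gives
  \<open>\<bar>\<lambda>\<bar> \<parallel>f\<parallel>\<^sub>1 \<le> D vol(X) \<parallel>f\<parallel>\<^sub>1\<close>, where \<open>\<parallel>f\<parallel>\<^sub>1\<close> is finite and positive because
  square integrable functions on a finite measure space are integrable.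
  Sharpness: on \<open>n + 2\<close> points with the discrete metric and counting measure the constants
  are eigenfunctions with eigenvalue \<open>n + 1\<close>, the row sums \<open>n + 1\<close> of the kernel bound every
  eigenvalue (Gershgorin), and \<open>diam(X) vol(X) = n + 2\<close>.\<close>

context Metric_space
begin

lemma space_mm_borel: "space (mm_borel M d) = M"
  unfolding mm_borel_def by (simp add: space_measure_of_conv openin_mtopology subset_eq)

lemma openin_in_sets_mm_borel:
  assumes "openin mtopology U" shows "U \<in> sets (mm_borel M d)"
proof -
  have "{U. openin mtopology U} \<subseteq> Pow M"
    using openin_subset by fastforce
  then show ?thesis
    unfolding mm_borel_def using assms by (simp add: sets_measure_of_conv sigma_sets.Basic)
qed

lemma continuous_map_imp_measurable_mm_borel:
  assumes g: "continuous_map mtopology euclidean g"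
  shows "g \<in> borel_measurable (mm_borel M d)"
proof (rule borel_measurableI)
  fix S :: "'b set" assume "open S"
  then have "openin mtopology {x \<in> M. g x \<in> S}"
    using openin_continuous_map_preimage[OF g] by simp
  moreover have "g -` S \<inter> space (mm_borel M d) = {x \<in> M. g x \<in> S}"
    by (auto simp: space_mm_borel)
  ultimately show "g -` S \<inter> space (mm_borel M d) \<in> sets (mm_borel M d)"
    by (simp add: openin_in_sets_mm_borel)
qed

lemma measurable_mm_borel_dist:
  assumes "x \<in> M" shows "d x \<in> borel_measurable (mm_borel M d)"
  using continuous_on_mdist[of x "metric (M, d)"] assms
  by (intro continuous_map_imp_measurable_mm_borel) simp

lemma dist_le_mm_diam:
  assumes "mbounded M" "x \<in> M" "y \<in> M" shows "d x y \<le> mm_diam M d"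
proof -
  obtain B where "\<forall>x\<in>M. \<forall>y\<in>M. d x y \<le> B"
    using assms(1) unfolding mbounded_alt by blast
  then show ?thesis
    unfolding mm_diam_def using assms(2,3) by (intro cSup_upper) (auto simp: bdd_above_def)
qed

lemma mtopology_eq_discrete_topology:
  "finite M \<Longrightarrow> mtopology = discrete_topology M"
  by (simp add: Hausdorff_space_mtopology finite_topspace_imp_discrete_topology)

lemma compact_mm_space_count_space:
  assumes "finite M" shows "compact_mm_space M d (count_space M)"
proof -
  have "{U. openin mtopology U} = Pow M"
    by (auto simp: mtopology_eq_discrete_topology[OF assms])
  then have "sets (mm_borel M d) = Pow M"
    unfolding mm_borel_def
    by (simp add: sets_measure_of_conv sigma_algebra.sigma_sets_eq[OF sigma_algebra_Pow])
  moreover have "compact_space mtopology"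
    by (simp add: mtopology_eq_discrete_topology[OF assms] compact_space_discrete_topology assms)
  ultimately show ?thesis
    unfolding compact_mm_space_def
    by (simp add: Metric_space_axioms assms finite_measure_count_space)
qed

end

lemma (in finite_measure) integral_kernel_abs_le:
  fixes f :: "'a \<Rightarrow> real"
  assumes f: "integrable M f" and k: "k \<in> borel_measurable M"
    and k_le: "\<And>y. y \<in> space M \<Longrightarrow> \<bar>k y\<bar> \<le> D"
  shows "\<bar>\<integral>y. f y * k y \<partial>M\<bar> \<le> D * (\<integral>y. \<bar>f y\<bar> \<partial>M)"
proof -
  have le: "\<bar>f y * k y\<bar> \<le> D * \<bar>f y\<bar>" if "y \<in> space M" for y
    using k_le[OF that] mult_right_mono[of "\<bar>k y\<bar>" D "\<bar>f y\<bar>"] by (simp add: abs_mult mult.commute)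
  have int: "integrable M (\<lambda>y. f y * k y)"
  proof (rule Bochner_Integration.integrable_bound[where f = "\<lambda>y. D * \<bar>f y\<bar>"])
    show "AE y in M. norm (f y * k y) \<le> norm (D * \<bar>f y\<bar>)"
      using le by (auto intro!: AE_I2 order.trans[OF _ abs_ge_self])
  qed (use f k in auto)
  have "\<bar>\<integral>y. f y * k y \<partial>M\<bar> \<le> (\<integral>y. \<bar>f y * k y\<bar> \<partial>M)"
    by (rule integral_abs_bound)
  also have "\<dots> \<le> (\<integral>y. D * \<bar>f y\<bar> \<partial>M)"
    using int f le by (intro integral_mono) auto
  finally show ?thesis by simp
qed

lemma (in finite_measure) kernel_eigenvalue_abs_le:
  fixes f :: "'a \<Rightarrow> real"
  assumes f: "integrable M f" and f_nz: "\<not> (AE x in M. f x = 0)"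
    and k: "\<And>x. x \<in> space M \<Longrightarrow> k x \<in> borel_measurable M"
    and k_le: "\<And>x y. x \<in> space M \<Longrightarrow> y \<in> space M \<Longrightarrow> \<bar>k x y\<bar> \<le> D"
    and eigen: "AE x in M. (\<integral>y. f y * k x y \<partial>M) = l * f x"
  shows "\<bar>l\<bar> \<le> D * measure M (space M)"
proof -
  define I where "I = (\<integral>y. \<bar>f y\<bar> \<partial>M)"
  have "AE x in M. \<bar>l\<bar> * \<bar>f x\<bar> \<le> D * I"
    using eigen AE_space
  proof eventually_elim
    case (elim x)
    then have "\<bar>l\<bar> * \<bar>f x\<bar> = \<bar>\<integral>y. f y * k x y \<partial>M\<bar>" by (simp add: abs_mult)
    also have "\<dots> \<le> D * I"
      unfolding I_def using elim by (intro integral_kernel_abs_le f k k_le)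
    finally show ?case .
  qed
  then have "(\<integral>x. \<bar>l\<bar> * \<bar>f x\<bar> \<partial>M) \<le> (\<integral>x. D * I \<partial>M)"
    using f by (intro integral_mono_AE) auto
  then have le: "\<bar>l\<bar> * I \<le> (D * measure M (space M)) * I"
    by (simp add: I_def mult_ac)
  have "I \<noteq> 0"
    using f_nz integral_nonneg_eq_0_iff_AE[of M "\<lambda>y. \<bar>f y\<bar>"] f by (auto simp: I_def)
  moreover have "I \<ge> 0" by (simp add: I_def)
  ultimately show ?thesis using le by simp
qed

lemma compact_mm_space_eigenvalue_abs_le:
  assumes "compact_mm_space M d \<mu>" and "dist_kernel_eigenvalue \<mu> d l"
  shows "\<bar>l\<bar> \<le> mm_diam M d * mm_vol \<mu>"
proof -
  interpret Metric_space M d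
    using assms(1) by (simp add: compact_mm_space_def)
  interpret finite_measure \<mu>
    using assms(1) by (simp add: compact_mm_space_def)
  have space: "space \<mu> = M" and sets: "sets \<mu> = sets (mm_borel M d)"
    and "compact_space mtopology"
    using assms(1) by (auto simp: compact_mm_space_def)
  then have "mbounded M"
    by (metis compact_space_def compactin_imp_mbounded topspace_mtopology)
  obtain f where f: "f \<in> borel_measurable \<mu>" "integrable \<mu> (\<lambda>x. (f x)\<^sup>2)"
    and f_nz: "\<not> (AE x in \<mu>. f x = 0)"
    and eigen: "AE x in \<mu>. (\<integral>y. f y * d x y \<partial>\<mu>) = l * f x"
    using assms(2) by (auto simp: dist_kernel_eigenvalue_def dist_kernel_op_def)
  show ?thesis
    unfolding mm_vol_def
  proof (rule kernel_eigenvalue_abs_le[OF square_integrable_imp_integrable[OF f] f_nz _ _ eigen])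
    show "d x \<in> borel_measurable \<mu>" if "x \<in> space \<mu>" for x
      using measurable_mm_borel_dist that measurable_cong_sets[OF sets refl] space by auto
    show "\<bar>d x y\<bar> \<le> mm_diam M d" if "x \<in> space \<mu>" "y \<in> space \<mu>" for x y
      using dist_le_mm_diam[OF \<open>mbounded M\<close>] that space by simp
  qed
qed

lemma eigenvalue_abs_le_row_sum:
  fixes k :: "'a \<Rightarrow> 'a \<Rightarrow> real"
  assumes A: "finite A" and f_nz: "\<exists>x\<in>A. f x \<noteq> 0"
    and eigen: "\<forall>x\<in>A. (\<Sum>y\<in>A. f y * k x y) = l * f x"
    and row_sum: "\<forall>x\<in>A. (\<Sum>y\<in>A. \<bar>k x y\<bar>) \<le> R"
  shows "\<bar>l\<bar> \<le> R"
proof -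
  define m where "m = Max ((\<lambda>y. \<bar>f y\<bar>) ` A)"
  have m_ge: "\<bar>f y\<bar> \<le> m" if "y \<in> A" for y
    using A that by (simp add: m_def)
  have "m \<in> (\<lambda>y. \<bar>f y\<bar>) ` A"
    unfolding m_def using A f_nz by (intro Max_in) auto
  then obtain x where x: "x \<in> A" "\<bar>f x\<bar> = m"
    by auto
  have "m > 0"
    using f_nz m_ge by force
  have "\<bar>l\<bar> * m = \<bar>\<Sum>y\<in>A. f y * k x y\<bar>"
    using eigen x by (simp add: abs_mult)
  also have "\<dots> \<le> (\<Sum>y\<in>A. \<bar>f y\<bar> * \<bar>k x y\<bar>)"
    using sum_abs[of "\<lambda>y. f y * k x y" A] by (simp add: abs_mult)
  also have "\<dots> \<le> (\<Sum>y\<in>A. m * \<bar>k x y\<bar>)"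
    using m_ge by (intro sum_mono mult_right_mono) auto
  also have "\<dots> \<le> m * R"
    using row_sum x \<open>m > 0\<close> by (simp add: sum_distrib_left[symmetric])
  finally show ?thesis
    using \<open>m > 0\<close> by (simp add: mult.commute)
qed

lemma dist_kernel_eigenvalue_count_space:
  assumes "finite A"
  shows "dist_kernel_eigenvalue (count_space A) k l \<longleftrightarrow>
    (\<exists>f. (\<exists>x\<in>A. f x \<noteq> 0) \<and> (\<forall>x\<in>A. (\<Sum>y\<in>A. f y * k x y) = l * f x))"
  using assms
  by (simp add: dist_kernel_eigenvalue_def dist_kernel_op_def AE_count_space integrable_count_space
      lebesgue_integral_count_space_finite)

definition discrete_dist :: "'a \<Rightarrow> 'a \<Rightarrow> real" where
  "discrete_dist x y = (if x = y then 0 else 1)"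

lemma Metric_space_discrete_dist: "Metric_space A discrete_dist"
  by unfold_locales (auto simp: discrete_dist_def)

lemma sum_discrete_dist:
  assumes "finite A" "x \<in> A"
  shows "(\<Sum>y\<in>A. discrete_dist x y) = real (card A) - 1"
proof -
  have "(\<Sum>y\<in>A. discrete_dist x y) = real (card (A - {x}))"
    using assms by (simp add: discrete_dist_def sum.If_cases Diff_eq)
  also have "\<dots> = real (card A) - 1"
  proof -
    have "card A \<ge> 1"
      using assms card_gt_0_iff by (metis One_nat_def Suc_leI empty_iff)
    then show ?thesis
      using assms by (simp add: card_Diff_singleton of_nat_diff)
  qed
  finally show ?thesis .
qed

lemma mm_diam_discrete_dist:
  assumes "x \<in> A" "y \<in> A" "x \<noteq> y"
  shows "mm_diam A discrete_dist = 1"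
proof -
  have "{discrete_dist x x' | x x'. x \<in> A \<and> x' \<in> A} = {0, 1}"
    using assms by (auto simp: discrete_dist_def)
  then show ?thesis
    unfolding mm_diam_def by (auto intro!: cSup_eq_maximum)
qed

lemma dist_kernel_eigenvalue_discrete_dist:
  assumes "finite A" "A \<noteq> {}"
  shows "dist_kernel_eigenvalue (count_space A) discrete_dist (real (card A) - 1)"
  using assms by (auto simp: dist_kernel_eigenvalue_count_space sum_discrete_dist intro!: exI[of _ "\<lambda>_. 1"])

lemma dist_kernel_eigenvalue_discrete_dist_abs_le:
  assumes "finite A" "dist_kernel_eigenvalue (count_space A) discrete_dist l"
  shows "\<bar>l\<bar> \<le> real (card A) - 1"
proof -
  obtain f where "\<exists>x\<in>A. f x \<noteq> 0" "\<forall>x\<in>A. (\<Sum>y\<in>A. f y * discrete_dist x y) = l * f x"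
    using assms by (auto simp: dist_kernel_eigenvalue_count_space)
  moreover have "\<forall>x\<in>A. (\<Sum>y\<in>A. \<bar>discrete_dist x y\<bar>) \<le> real (card A) - 1"
    using sum_discrete_dist[OF assms(1)] by (simp add: discrete_dist_def)
  ultimately show ?thesis
    using eigenvalue_abs_le_row_sum[OF assms(1)] by blast
qed

lemma dist_kernel_eigenvalue_bound_asymptotically_sharp:
  "\<exists>(Ms :: nat \<Rightarrow> real set) ds \<mu>s ls.
     (\<forall>n. compact_mm_space (Ms n) (ds n) (\<mu>s n) \<and>
          dist_kernel_eigenvalue (\<mu>s n) (ds n) (ls n) \<and>
          (\<forall>l. dist_kernel_eigenvalue (\<mu>s n) (ds n) l \<longrightarrow> \<bar>l\<bar> \<le> \<bar>ls n\<bar>)) \<and>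
     (\<lambda>n. \<bar>ls n\<bar> / (mm_diam (Ms n) (ds n) * mm_vol (\<mu>s n))) \<longlonglongrightarrow> 1"
proof -
  define A where "A n = real ` {..Suc n}" for n
  have A: "finite (A n)" "A n \<noteq> {}" "card (A n) = n + 2" for n
    by (auto simp: A_def card_image)
  have diam: "mm_diam (A n) discrete_dist = 1" for n
    by (rule mm_diam_discrete_dist[of 0 _ 1]) (auto simp: A_def image_iff)
  have vol: "mm_vol (count_space (A n)) = real n + 2" for n
    by (simp add: mm_vol_def A)
  have eigen: "dist_kernel_eigenvalue (count_space (A n)) discrete_dist (real n + 1)" for n
    using dist_kernel_eigenvalue_discrete_dist[of "A n"] A by (simp add: add.commute)
  have eigen_le: "\<bar>l\<bar> \<le> real n + 1"
    if "dist_kernel_eigenvalue (count_space (A n)) discrete_dist l" for n l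
    using dist_kernel_eigenvalue_discrete_dist_abs_le[OF _ that] A by simp
  have "(\<lambda>n::nat. (real n + 1) / (real n + 2)) \<longlonglongrightarrow> 1"
    by real_asymp
  then show ?thesis
    using A Metric_space.compact_mm_space_count_space[OF Metric_space_discrete_dist] eigen eigen_le
    by (intro exI[of _ A] exI[of _ "\<lambda>_. discrete_dist"] exI[of _ "\<lambda>n. count_space (A n)"]
        exI[of _ "\<lambda>n. real n + 1"]) (auto simp: diam vol)
qed

theorem lemma2p7:
  shows "(\<forall>(M :: 'a set) d \<mu> l.
            compact_mm_space M d \<mu> \<and> dist_kernel_eigenvalue \<mu> d l \<longrightarrow>
            \<bar>l\<bar> \<le> mm_diam M d * mm_vol \<mu>)
       \<and> (\<exists>(Ms :: nat \<Rightarrow> real set) ds \<mu>s ls.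
            (\<forall>n. compact_mm_space (Ms n) (ds n) (\<mu>s n) \<and>
                 dist_kernel_eigenvalue (\<mu>s n) (ds n) (ls n) \<and>
                 (\<forall>l. dist_kernel_eigenvalue (\<mu>s n) (ds n) l \<longrightarrow> \<bar>l\<bar> \<le> \<bar>ls n\<bar>)) \<and>
            (\<lambda>n. \<bar>ls n\<bar> / (mm_diam (Ms n) (ds n) * mm_vol (\<mu>s n))) \<longlonglongrightarrow> 1)"
  using compact_mm_space_eigenvalue_abs_le dist_kernel_eigenvalue_bound_asymptotically_sharp
  by blast

end
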